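(* Fix $m\ge 1$, a partition $\xi$ with all parts $\le m$, and $\mu\in\mathbb Z_{\ge0}$ with $\mu=\mu_1m+\mu_0$, $0\le\mu_0<m$. Let $t=\#\{i:\xi_i=m\}$ and assume $k:=\mu_1+1-t\ge 0$. Let $\alpha_0:=m-\mu_0-1$ and let $\alpha_1,\dots,\alpha_L$ be the parts of $\xi$ strictly smaller than $m$, listed with multiplicity, so that \[ F_{\xi,m,\mu}(x)=\frac{p_{m-\mu_0-1}(x)p_\xi(x)}{p_m(x)^{\mu_1+1}}=\frac{\prod_{i=0}^L p_{\alpha_i}(x)}{p_m(x)^k}=\sum_{r\ge0}a_rx^r. \] Then for every $r\ge 0$, \[ a_r=\sum_{\substack{j_0,\dots,j_L\ge 0,\ u_1,\dots,u_k\ge 0\\ j_0+\cdots+j_L+u_1+\cdots+u_k=r}}(-1)^{j_0+\cdots+j_L}\left(\prod_{i=0}^L\binom{\alpha_i-j_i}{j_i}\right)\left(\prod_{\nu=1}^kB_m(u_\nu)\right), \] where the second product is $1$ if $k=0$. Equivalently, $a_r$ is the signed count of tuples $(M_0,\dots,M_L,\gamma_1,\dots,\gamma_k)$ such that each $M_i$ is a matching in the path graph $P_{\alpha_i}$, each $\gamma_\nu$ is a full-height strip walk of height $m-1$, $|M_0|+\cdots+|M_L|+e(\gamma_1)+\cdots+e(\gamma_k)=r$, and each tuple is counted with sign $(-1)^{|M_0|+\cdots+|M_L|}$.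
   Context: $p_0=p_1=1$, $p_{r+1}(x)=p_r(x)-xp_{r-1}(x)$ ($r\ge1$); $p_\xi=\prod_i p_{\xi_i}$. Convention: $\binom{A}{B}=0$ unless $0\le B\le A$. For $r\ge0$, $P_r$ is the path graph on vertices $1,\dots,r$ with edges $\{i,i+1\}$, $1\le i<r$ ($P_0$ empty); a matching is a set of pairwise disjoint edges, $|M|$ its number of edges. For $m\ge1$ and $0\le a,b\le m-1$, a strip walk of height $m-1$ from $a$ to $b$ of length $L$ is a sequence $(h_0,\dots,h_L)$ of integers with $h_0=a$, $h_L=b$, $h_{i+1}-h_i\in\{\pm1\}$, and $0\le h_i\le m-1$ for all $i$; $w^{(m)}_L(a,b)$ denotes the number of them. A full-height strip walk is one from $0$ to $m-1$; its excess is $e(\gamma)=(L-(m-1))/2$. $B_m(u):=w^{(m)}_{m-1+2u}(0,m-1)$, the number of full-height strip walks of excess $u$. *)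

theory Defs
  imports "HOL-Computational_Algebra.Computational_Algebra"
begin

fun pp :: "nat \<Rightarrow> 'a::comm_ring_1 poly" where
  "pp 0 = 1"
| "pp (Suc 0) = 1"
| "pp (Suc (Suc r)) = pp (Suc r) - [:0, 1:] * pp r"

text \<open>Strip walks of height m-1: nonempty integer sequences (h_0,...,h_L) with steps +-1
  staying in [0, m-1].  The length of the walk is (length of the list) - 1.\<close>
definition strip_walk :: "nat \<Rightarrow> int list \<Rightarrow> bool" where
  "strip_walk m hs \<longleftrightarrow> hs \<noteq> [] \<and>
     (\<forall>i. Suc i < length hs \<longrightarrow> \<bar>hs ! Suc i - hs ! i\<bar> = 1) \<and>
     (\<forall>h \<in> set hs. 0 \<le> h \<and> h \<le> int m - 1)"

definition walk_count :: "nat \<Rightarrow> nat \<Rightarrow> int \<Rightarrow> int \<Rightarrow> nat" where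
  "walk_count m L a b = card {hs. strip_walk m hs \<and> length hs = Suc L \<and>
                                 hs ! 0 = a \<and> hs ! L = b}"

definition full_height_walk :: "nat \<Rightarrow> int list \<Rightarrow> bool" where
  "full_height_walk m hs \<longleftrightarrow> strip_walk m hs \<and> hd hs = 0 \<and> last hs = int m - 1"

definition excess :: "nat \<Rightarrow> int list \<Rightarrow> nat" where
  "excess m hs = (length hs - 1 - (m - 1)) div 2"

definition Bm :: "nat \<Rightarrow> nat \<Rightarrow> nat" where
  "Bm m u = walk_count m (m - 1 + 2 * u) 0 (int m - 1)"

definition path_matching :: "nat \<Rightarrow> nat set set \<Rightarrow> bool" where
  "path_matching n M \<longleftrightarrow> M \<subseteq> {{i, i + 1} | i. 1 \<le> i \<and> i < n} \<and>
     (\<forall>e \<in> M. \<forall>e' \<in> M. e \<noteq> e' \<longrightarrow> e \<inter> e' = {})"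

end

theory Submission
  imports Defs
begin

(* The coefficient of x^j in p_a is (-1)^j binom(a-j, j); the numbers binom(a-j, j) satisfy the
   recursion of the p_a, and so does the number of j-edge matchings of the path P_a.
   The t factors p_m of p_xi cancel against the denominator, leaving 1/p_m^k.
   For b < m, the series p_(m-1-b)/p_m and the generating function (by excess) of strip walks
   from 0 to height b solve the same triangular linear system, so 1/p_m = sum_u B_m(u) x^u.
   Expanding the product of the L+1+k resulting series gives the first formula; grouping the
   tuples of matchings and walks by their sizes and excesses gives the second. *)

lemma diff_choose_SucSuc:
  "((n - i) choose Suc i) + ((n - i) choose i) = (Suc (Suc n) - Suc i) choose Suc i"
  by (cases "i \<le> n") (auto simp: Suc_diff_le)

lemma coeff_pp: "coeff (pp n :: 'a::comm_ring_1 poly) j = (-1) ^ j * of_nat ((n - j) choose j)"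
proof (induction n arbitrary: j rule: pp.induct)
  case (3 n)
  show ?case
  proof (cases j)
    case (Suc i)
    have "coeff (pp (Suc (Suc n)) :: 'a poly) j = coeff (pp (Suc n)) (Suc i) - coeff (pp n) i"
      using Suc by (simp add: coeff_pCons)
    also have "\<dots> = (-1) ^ Suc i * of_nat (((n - i) choose Suc i) + ((n - i) choose i))"
      using 3 by (simp add: algebra_simps)
    finally show ?thesis
      using Suc by (simp only: diff_choose_SucSuc)
  qed (use 3 in \<open>simp add: coeff_pCons\<close>)
qed (auto simp: coeff_1 gr0_conv_Suc)

lemma fps_of_poly_pp_rec:
  "fps_of_poly (pp (Suc (Suc r))) = fps_of_poly (pp (Suc r)) - fps_X * fps_of_poly (pp r)"
  by (simp add: fps_of_poly_diff fps_of_poly_mult fps_of_poly_pCons)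

lemma fps_of_poly_pp_times_inverse:
  "fps_of_poly (pp n) * inverse (fps_of_poly (pp n)) = (1 :: 'a::field fps)"
proof (rule inverse_mult_eq_1')
  have "coeff (pp n :: 'a poly) 0 = 1"
    by (simp add: coeff_pp)
  then show "fps_of_poly (pp n :: 'a poly) $ 0 \<noteq> 0"
    by simp
qed

section \<open>Strip walks\<close>

definition strip_walks :: "nat \<Rightarrow> nat \<Rightarrow> int \<Rightarrow> int \<Rightarrow> int list set" where
  "strip_walks m N a c = {hs. strip_walk m hs \<and> length hs = Suc N \<and> hs ! 0 = a \<and> hs ! N = c}"

lemma walk_count_eq_card: "walk_count m N a c = card (strip_walks m N a c)"
  by (simp add: walk_count_def strip_walks_def)

lemma finite_strip_walks: "finite (strip_walks m N a c)"
proof (rule finite_subset)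
  show "strip_walks m N a c \<subseteq> {hs. set hs \<subseteq> {0..int m - 1} \<and> length hs = Suc N}"
    by (auto simp: strip_walks_def strip_walk_def)
qed (simp add: finite_lists_length_eq)

lemma strip_walk_displacement:
  assumes "strip_walk m hs" and "i < length hs"
  shows "\<bar>hs ! i - hs ! 0\<bar> \<le> int i \<and> even (hs ! i - hs ! 0 + int i)"
  using assms(2)
proof (induction i)
  case (Suc i)
  have "\<bar>hs ! Suc i - hs ! i\<bar> = 1"
    using assms(1) Suc.prems by (simp add: strip_walk_def)
  then consider "hs ! Suc i = hs ! i + 1" | "hs ! Suc i = hs ! i - 1"
    by linarith
  then show ?case
    using Suc by cases auto
qed simp

lemma strip_walks_empty:
  assumes "c < 0 \<or> int m \<le> c \<or> int N < \<bar>c - a\<bar>"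
  shows "strip_walks m N a c = {}"
proof (rule ccontr)
  assume "strip_walks m N a c \<noteq> {}"
  then obtain hs where "strip_walk m hs" "length hs = Suc N" "hs ! 0 = a" "hs ! N = c"
    by (auto simp: strip_walks_def)
  moreover from this have "c \<in> set hs"
    by (metis lessI nth_mem)
  ultimately show False
    using assms strip_walk_displacement[of m hs N] by (auto simp: strip_walk_def)
qed

lemma walk_count_empty:
  "c < 0 \<or> int m \<le> c \<or> int N < \<bar>c - a\<bar> \<Longrightarrow> walk_count m N a c = 0"
  by (simp add: walk_count_eq_card strip_walks_empty)

lemma walk_count_0:
  assumes "0 \<le> a" "a < int m"
  shows "walk_count m 0 a a = 1"
proof -
  have "strip_walks m 0 a a = {[a]}"
    using assms by (auto simp: strip_walks_def strip_walk_def length_Suc_conv)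
  then show ?thesis
    by (simp add: walk_count_eq_card)
qed

lemma strip_walk_snoc:
  assumes "hs \<noteq> []"
  shows "strip_walk m (hs @ [c]) \<longleftrightarrow>
    strip_walk m hs \<and> \<bar>c - last hs\<bar> = 1 \<and> 0 \<le> c \<and> c \<le> int m - 1"
proof -
  have "(\<forall>i. Suc i < length (hs @ [c]) \<longrightarrow> \<bar>(hs @ [c]) ! Suc i - (hs @ [c]) ! i\<bar> = 1) \<longleftrightarrow>
        (\<forall>i. Suc i < length hs \<longrightarrow> \<bar>hs ! Suc i - hs ! i\<bar> = 1) \<and> \<bar>c - last hs\<bar> = 1"
    using assms by (auto simp: nth_append last_conv_nth less_Suc_eq) (metis One_nat_def diff_Suc_1)
  with assms show ?thesis
    by (auto simp: strip_walk_def)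
qed

lemma strip_walks_Suc:
  assumes "0 \<le> c" "c < int m"
  shows "strip_walks m (Suc N) a c =
    (\<lambda>hs. hs @ [c]) ` (strip_walks m N a (c - 1) \<union> strip_walks m N a (c + 1))"
proof -
  have snoc: "hs @ [c] \<in> strip_walks m (Suc N) a c \<longleftrightarrow>
      hs \<in> strip_walks m N a (c - 1) \<union> strip_walks m N a (c + 1)" for hs
  proof (cases "length hs = Suc N")
    case True
    then have "hs \<noteq> []"
      by auto
    moreover have "last hs = hs ! N"
      using True by (cases hs rule: rev_cases) (auto simp: nth_append)
    ultimately have "strip_walk m (hs @ [c]) \<longleftrightarrow>
        strip_walk m hs \<and> (hs ! N = c - 1 \<or> hs ! N = c + 1)"
      using assms by (auto simp: strip_walk_snoc)
    with True show ?thesis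
      by (auto simp: strip_walks_def nth_append)
  qed (auto simp: strip_walks_def)
  have split: "hs = butlast hs @ [c]" if "hs \<in> strip_walks m (Suc N) a c" for hs
  proof -
    from that have "length hs = Suc (Suc N)" and "hs ! Suc N = c"
      by (auto simp: strip_walks_def)
    then show ?thesis
      by (cases hs rule: rev_cases) (auto simp: nth_append)
  qed
  show ?thesis
    by (auto simp: image_iff snoc) (metis split snoc)
qed

lemma walk_count_Suc:
  assumes "0 \<le> c" "c < int m"
  shows "walk_count m (Suc N) a c = walk_count m N a (c - 1) + walk_count m N a (c + 1)"
proof -
  have "strip_walks m N a (c - 1) \<inter> strip_walks m N a (c + 1) = {}"
    by (auto simp: strip_walks_def)
  then show ?thesis
    unfolding walk_count_eq_card strip_walks_Suc[OF assms]
    by (subst card_image) (auto simp: inj_on_def finite_strip_walks card_Un_disjoint)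
qed

section \<open>The power series 1/p_m\<close>

(* The generating functions, by excess, of the strip walks from 0 to the heights b solve this
   system: the last step of a walk enters b from b - 1 or from b + 1. *)
definition strip_system :: "nat \<Rightarrow> (nat \<Rightarrow> 'a::comm_ring_1 fps) \<Rightarrow> bool" where
  "strip_system m V \<longleftrightarrow>
     V 0 = 1 + fps_X * V 1 \<and>
     (\<forall>b. Suc b < m \<longrightarrow> V (Suc b) = V b + fps_X * V (Suc (Suc b))) \<and>
     (\<forall>b\<ge>m. V b = 0)"

lemma strip_system_unique:
  assumes "strip_system m V" and "strip_system m W"
  shows "V = W"
proof -
  have "V b $ n = W b $ n" for b n
  proof (induction n arbitrary: b)
    case 0
    show ?case
    proof (induction b)
      case (Suc b)
      then show ?case
        using assms by (cases "Suc b < m") (simp_all add: strip_system_def)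
    qed (use assms in \<open>simp add: strip_system_def\<close>)
  next
    case (Suc n)
    note outer_IH = Suc.IH
    show ?case
    proof (induction b)
      case 0
      show ?case
        using assms outer_IH by (simp add: strip_system_def)
    next
      case (Suc b)
      then show ?case
        using assms outer_IH by (cases "Suc b < m") (simp_all add: strip_system_def)
    qed
  qed
  then show ?thesis
    by (auto simp: fun_eq_iff fps_eq_iff)
qed

definition height_walks_fps :: "nat \<Rightarrow> nat \<Rightarrow> 'a::comm_ring_1 fps" where
  "height_walks_fps m b = Abs_fps (\<lambda>n. of_nat (walk_count m (b + 2 * n) 0 (int b)))"

lemma strip_system_height_walks_fps:
  assumes "m \<ge> 1"
  shows "strip_system m (height_walks_fps m)"
  unfolding strip_system_def
proof (intro conjI allI impI)
  have "walk_count m 0 0 0 = 1"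
    using assms by (simp add: walk_count_0)
  moreover have "walk_count m (Suc (Suc (2 * n))) 0 0 = walk_count m (Suc (2 * n)) 0 1" for n
    using assms by (simp add: walk_count_Suc walk_count_empty)
  ultimately show "height_walks_fps m 0 = 1 + fps_X * height_walks_fps m 1"
    using assms by (auto simp: fps_eq_iff height_walks_fps_def gr0_conv_Suc)
next
  fix b assume "Suc b < m"
  have "walk_count m (Suc b + 2 * n) 0 (int (Suc b)) =
      walk_count m (b + 2 * n) 0 (int b) +
      (if n = 0 then 0 else walk_count m (Suc (Suc b) + 2 * (n - 1)) 0 (int (Suc (Suc b))))" for n
  proof -
    have "walk_count m (Suc (b + 2 * n)) 0 (int b + 1) =
        walk_count m (b + 2 * n) 0 (int b) + walk_count m (b + 2 * n) 0 (int b + 2)"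
      using \<open>Suc b < m\<close> walk_count_Suc[of "int b + 1" m "b + 2 * n" 0] by (simp add: add.commute)
    then show ?thesis
      by (cases n) (auto simp: walk_count_empty algebra_simps)
  qed
  then show "height_walks_fps m (Suc b) =
      height_walks_fps m b + fps_X * height_walks_fps m (Suc (Suc b))"
    by (simp add: fps_eq_iff height_walks_fps_def)
next
  fix b assume "m \<le> b"
  then show "height_walks_fps m b = 0"
    by (simp add: fps_eq_iff height_walks_fps_def walk_count_empty)
qed

lemma strip_system_pp_quotient:
  assumes "m \<ge> 1"
  shows "strip_system m
    (\<lambda>b. if b < m then fps_of_poly (pp (m - 1 - b)) * inverse (fps_of_poly (pp m))
          else 0 :: 'a::field fps)"
proof -
  define Q :: "nat \<Rightarrow> 'a fps" where "Q r = fps_of_poly (pp r) * inverse (fps_of_poly (pp m))" for r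
  have Q_rec: "Q (Suc r) = Q (Suc (Suc r)) + fps_X * Q r" for r
    by (simp add: Q_def fps_of_poly_pp_rec algebra_simps del: pp.simps)
  have "Q m = 1"
    by (simp add: Q_def fps_of_poly_pp_times_inverse)
  have "Q 0 = Q 1"
    by (simp add: Q_def)
  show ?thesis
    unfolding strip_system_def Q_def[symmetric]
  proof (intro conjI allI impI)
    show "(if 0 < m then Q (m - 1 - 0) else 0) = 1 + fps_X * (if 1 < m then Q (m - 1 - 1) else 0)"
    proof (cases "m = 1")
      case False
      then obtain r where "m = Suc (Suc r)"
        using assms by (cases m; cases "m - 1") auto
      then show ?thesis
        using Q_rec[of r] \<open>Q m = 1\<close> by simp
    qed (use \<open>Q m = 1\<close> \<open>Q 0 = Q 1\<close> in simp)
  next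
    fix b assume "Suc b < m"
    show "(if Suc b < m then Q (m - 1 - Suc b) else 0) =
        (if b < m then Q (m - 1 - b) else 0) +
        fps_X * (if Suc (Suc b) < m then Q (m - 1 - Suc (Suc b)) else 0)"
    proof (cases "Suc (Suc b) < m")
      case True
      then have "m - 1 - b = Suc (Suc (m - 3 - b))" "m - 1 - Suc b = Suc (m - 3 - b)"
        "m - 1 - Suc (Suc b) = m - 3 - b"
        by auto
      with True show ?thesis
        using Q_rec[of "m - 3 - b"] by simp
    next
      case False
      with \<open>Suc b < m\<close> have "m - 1 - b = 1" "m - 1 - Suc b = 0"
        by auto
      with False \<open>Suc b < m\<close> show ?thesis
        using \<open>Q 0 = Q 1\<close> by simp
    qed
  qed simp
qed

lemma inverse_pp_nth:
  assumes "m \<ge> 1"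
  shows "inverse (fps_of_poly (pp m)) $ u = (of_nat (Bm m u) :: 'a::field)"
proof -
  have "(\<lambda>b. if b < m then fps_of_poly (pp (m - 1 - b)) * inverse (fps_of_poly (pp m)) else 0) =
      (height_walks_fps m :: nat \<Rightarrow> 'a fps)"
    using assms strip_system_unique[OF strip_system_pp_quotient strip_system_height_walks_fps]
    by blast
  from fun_cong[OF this, of "m - 1"]
  have "inverse (fps_of_poly (pp m)) = (height_walks_fps m (m - 1) :: 'a fps)"
    using assms by simp
  then show ?thesis
    using assms by (simp add: height_walks_fps_def Bm_def of_nat_diff)
qed

section \<open>Coefficients of products of power series\<close>

lemma fps_nth_prod_list:
  "prod_list fs $ r = (\<Sum>v\<in>natpermute r (length fs). \<Prod>i<length fs. fs ! i $ (v ! i))"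
  for fs :: "'a::comm_ring_1 fps list"
proof (cases "length fs")
  case 0
  then show ?thesis
    by (simp add: natpermute_0)
next
  case (Suc n)
  then have "prod_list fs = (\<Prod>i = 0..n. fs ! i)"
    by (simp add: prod.list_conv_set_nth atLeastLessThanSuc_atLeastAtMost)
  then show ?thesis
    using Suc by (simp add: fps_prod_nth atLeastLessThanSuc_atLeastAtMost lessThan_atLeast0)
qed

definition natpermute_pairs :: "nat \<Rightarrow> nat \<Rightarrow> nat \<Rightarrow> (nat list \<times> nat list) set" where
  "natpermute_pairs r a k =
     {(js, us). length js = a \<and> length us = k \<and> sum_list js + sum_list us = r}"

lemma natpermute_pairs_eq_image:
  "natpermute_pairs r a k = (\<lambda>v. (take a v, drop a v)) ` natpermute r (a + k)"
proof (intro set_eqI iffI)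
  fix p assume "p \<in> natpermute_pairs r a k"
  then show "p \<in> (\<lambda>v. (take a v, drop a v)) ` natpermute r (a + k)"
    by (auto simp: natpermute_pairs_def natpermute_def image_iff intro!: exI[of _ "fst p @ snd p"])
qed (auto simp: natpermute_pairs_def natpermute_def simp flip: sum_list_append)

lemma finite_natpermute_pairs: "finite (natpermute_pairs r a k)"
  by (simp add: natpermute_pairs_eq_image natpermute_finite)

lemma sum_natpermute_add:
  "(\<Sum>v\<in>natpermute r (a + k). f v) = (\<Sum>(js, us)\<in>natpermute_pairs r a k. f (js @ us))"
proof (rule sum.reindex_bij_witness[where i = "\<lambda>(js, us). js @ us"
      and j = "\<lambda>v. (take a v, drop a v)"])
  fix v assume "v \<in> natpermute r (a + k)"
  then show "(take a v, drop a v) \<in> natpermute_pairs r a k"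
    by (auto simp: natpermute_pairs_eq_image)
qed (auto simp: natpermute_def natpermute_pairs_def)

lemma prod_lessThan_append:
  assumes "length js = length xs"
  shows "(\<Prod>i<length xs + length ys. f ((xs @ ys) ! i) ((js @ us) ! i)) =
    (\<Prod>i<length xs. f (xs ! i) (js ! i)) * (\<Prod>i<length ys. f (ys ! i) (us ! i))"
proof -
  have "{..<length xs + length ys} = {..<length xs} \<union> {length xs..<length xs + length ys}"
    by auto
  then show ?thesis
    using assms by (simp add: prod.union_disjoint prod.atLeastLessThan_shift_0[of _ "length xs"]
        nth_append lessThan_atLeast0 comp_def)
qed

lemma fps_nth_prod_list_mult:
  fixes fs gs :: "'a::comm_ring_1 fps list"
  shows "(prod_list fs * prod_list gs) $ r =
    (\<Sum>(js, us)\<in>natpermute_pairs r (length fs) (length gs).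
       (\<Prod>i<length fs. fs ! i $ (js ! i)) * (\<Prod>i<length gs. gs ! i $ (us ! i)))"
proof -
  have "(prod_list fs * prod_list gs) $ r =
      (\<Sum>v\<in>natpermute r (length fs + length gs).
         \<Prod>i<length fs + length gs. (fs @ gs) ! i $ (v ! i))"
    using fps_nth_prod_list[of "fs @ gs"] by simp
  also have "\<dots> = (\<Sum>(js, us)\<in>natpermute_pairs r (length fs) (length gs).
       \<Prod>i<length fs + length gs. (fs @ gs) ! i $ ((js @ us) ! i))"
    by (rule sum_natpermute_add)
  also have "\<dots> = (\<Sum>(js, us)\<in>natpermute_pairs r (length fs) (length gs).
       (\<Prod>i<length fs. fs ! i $ (js ! i)) * (\<Prod>i<length gs. gs ! i $ (us ! i)))"
    by (intro sum.cong refl) (auto simp: natpermute_pairs_def intro: prod_lessThan_append)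
  finally show ?thesis .
qed

section \<open>Matchings in paths\<close>

definition path_edges :: "nat \<Rightarrow> nat set set" where
  "path_edges n = (\<lambda>i. {i, Suc i}) ` {1..<n}"

definition path_matchings :: "nat \<Rightarrow> nat \<Rightarrow> nat set set set" where
  "path_matchings n j = {M. path_matching n M \<and> card M = j}"

lemma path_matching_iff: "path_matching n M \<longleftrightarrow> M \<subseteq> path_edges n \<and> pairwise disjnt M"
  unfolding path_matching_def path_edges_def pairwise_def disjnt_def
  by (simp add: setcompr_eq_image atLeastLessThan_def atLeast_def lessThan_def Collect_conj_eq)

lemma finite_path_edges: "finite (path_edges n)"
  by (simp add: path_edges_def)

lemma edge_in_path_edges: "{i, Suc i} \<in> path_edges n \<longleftrightarrow> 1 \<le> i \<and> i < n"
  by (auto simp: path_edges_def doubleton_eq_iff)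

lemma path_edges_mono: "n \<le> n' \<Longrightarrow> path_edges n \<subseteq> path_edges n'"
  by (auto simp: path_edges_def)

lemma finite_path_matchings: "finite (path_matchings n j)"
proof (rule finite_subset)
  show "path_matchings n j \<subseteq> Pow (path_edges n)"
    by (auto simp: path_matchings_def path_matching_iff)
qed (simp add: finite_path_edges)

lemma path_matching_finite: "path_matching n M \<Longrightarrow> finite M"
  using finite_path_edges by (auto simp: path_matching_iff intro: finite_subset)

lemma path_matchings_0: "path_matchings n 0 = {{}}"
  by (auto simp: path_matchings_def path_matching_iff[of n "{}"] dest: path_matching_finite)

lemma path_matchings_Suc_eq_empty: "n \<le> 1 \<Longrightarrow> path_matchings n (Suc j) = {}"
  by (auto simp: path_matchings_def path_matching_iff path_edges_def)

lemma path_matching_remove_last_edge: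
  assumes M: "path_matching (Suc (Suc n)) M" and e: "{Suc n, Suc (Suc n)} \<in> M"
  shows "path_matching n (M - {{Suc n, Suc (Suc n)}})"
proof -
  have "x \<in> path_edges n" if x: "x \<in> M - {{Suc n, Suc (Suc n)}}" for x
  proof -
    have "x \<in> path_edges (Suc (Suc n))"
      using M x by (auto simp: path_matching_iff)
    then obtain i where i: "x = {i, Suc i}" "1 \<le> i" "i < Suc (Suc n)"
      by (auto simp: path_edges_def)
    have "x \<in> M" and "x \<noteq> {Suc n, Suc (Suc n)}"
      using x by auto
    with M e have "disjnt x {Suc n, Suc (Suc n)}"
      by (meson pairwiseD path_matching_iff)
    with i have "i \<noteq> n" and "i \<noteq> Suc n"
      by (auto simp: disjnt_def)
    with i have "i < n"
      by simp
    with i show ?thesis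
      by (simp add: edge_in_path_edges)
  qed
  with M show ?thesis
    by (auto simp: path_matching_iff intro: pairwise_subset)
qed

lemma path_matching_insert_last_edge:
  assumes "path_matching n M"
  shows "path_matching (Suc (Suc n)) (insert {Suc n, Suc (Suc n)} M)"
proof -
  have "disjnt {Suc n, Suc (Suc n)} x" if "x \<in> path_edges n" for x
    using that by (auto simp: path_edges_def disjnt_def)
  with assms have "pairwise disjnt (insert {Suc n, Suc (Suc n)} M)"
    unfolding path_matching_iff pairwise_insert by (blast intro: disjnt_sym)
  moreover have "insert {Suc n, Suc (Suc n)} M \<subseteq> path_edges (Suc (Suc n))"
    using assms path_edges_mono[of n "Suc (Suc n)"]
    by (auto simp: edge_in_path_edges path_matching_iff)
  ultimately show ?thesis
    by (simp add: path_matching_iff)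
qed

lemma path_matching_SucSuc:
  fixes n :: nat
  defines "e \<equiv> {Suc n, Suc (Suc n)}"
  shows "path_matching (Suc (Suc n)) M \<longleftrightarrow>
    path_matching (Suc n) M \<or> (e \<in> M \<and> path_matching n (M - {e}))"
proof
  assume M: "path_matching (Suc (Suc n)) M"
  show "path_matching (Suc n) M \<or> (e \<in> M \<and> path_matching n (M - {e}))"
  proof (cases "e \<in> M")
    case True
    with M show ?thesis
      unfolding e_def by (simp add: path_matching_remove_last_edge)
  next
    case False
    have "path_edges (Suc (Suc n)) = insert e (path_edges (Suc n))"
      by (auto simp: path_edges_def e_def)
    with False M show ?thesis
      by (auto simp: path_matching_iff)
  qed
next
  assume "path_matching (Suc n) M \<or> (e \<in> M \<and> path_matching n (M - {e}))"
  then show "path_matching (Suc (Suc n)) M"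
  proof
    assume "path_matching (Suc n) M"
    then show ?thesis
      using path_edges_mono[of "Suc n" "Suc (Suc n)"] by (auto simp: path_matching_iff)
  next
    assume "e \<in> M \<and> path_matching n (M - {e})"
    then show ?thesis
      using path_matching_insert_last_edge[of n "M - {e}"] by (simp add: e_def insert_absorb)
  qed
qed

lemma path_matchings_SucSuc:
  "path_matchings (Suc (Suc n)) (Suc j) =
    path_matchings (Suc n) (Suc j) \<union> insert {Suc n, Suc (Suc n)} ` path_matchings n j"
  (is "_ = _ \<union> insert ?e ` _")
proof -
  have "?e \<notin> M" if "path_matching n M" for M
    using that by (auto simp: path_matching_iff edge_in_path_edges)
  then have "M \<in> insert ?e ` path_matchings n j \<longleftrightarrow>
      ?e \<in> M \<and> path_matching n (M - {?e}) \<and> card M = Suc j" for M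
    by (auto simp: path_matchings_def image_iff path_matching_finite card_Suc_Diff1
        intro!: exI[of _ "M - {?e}"])
  then show ?thesis
    by (auto simp: path_matchings_def path_matching_SucSuc)
qed

lemma card_path_matchings: "card (path_matchings n j) = (n - j) choose j"
proof (induction n arbitrary: j rule: induct_nat_012)
  case 0
  show ?case
    by (cases j) (simp_all add: path_matchings_0 path_matchings_Suc_eq_empty)
next
  case 1
  show ?case
    by (cases j) (simp_all add: path_matchings_0 path_matchings_Suc_eq_empty)
next
  case (ge2 n)
  show ?case
  proof (cases j)
    case (Suc i)
    let ?e = "{Suc n, Suc (Suc n)}"
    have "?e \<notin> M" if "path_matching (Suc n) M" for M
      using that by (auto simp: path_matching_iff edge_in_path_edges)
    then have disjoint: "path_matchings (Suc n) (Suc i) \<inter> insert ?e ` path_matchings n i = {}"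
      by (auto simp: path_matchings_def)
    have "?e \<notin> M" if "path_matching n M" for M
      using that by (auto simp: path_matching_iff edge_in_path_edges)
    then have "inj_on (insert ?e) (path_matchings n i)"
      unfolding inj_on_def path_matchings_def
      by (metis (no_types, lifting) insert_ident mem_Collect_eq)
    then have "card (path_matchings (Suc (Suc n)) j) =
        card (path_matchings (Suc n) (Suc i)) + card (path_matchings n i)"
      using disjoint by (simp add: Suc path_matchings_SucSuc card_Un_disjoint
          finite_path_matchings card_image)
    also have "\<dots> = ((n - i) choose Suc i) + ((n - i) choose i)"
      using ge2 by simp
    finally show ?thesis
      using Suc by (simp add: diff_choose_SucSuc)
  qed (simp add: path_matchings_0)
qed

section \<open>Counting tuples of matchings and walks\<close>

lemma card_lists_nth: "card {xs. length xs = n \<and> (\<forall>i<n. xs ! i \<in> A i)} = (\<Prod>i<n. card (A i))"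
proof (induction n arbitrary: A)
  case (Suc n)
  have "{xs. length xs = Suc n \<and> (\<forall>i<Suc n. xs ! i \<in> A i)} =
      (\<lambda>(x, xs). x # xs) ` (A 0 \<times> {xs. length xs = n \<and> (\<forall>i<n. xs ! i \<in> A (Suc i))})"
    by (force simp: length_Suc_conv All_less_Suc2)
  moreover have "inj_on (\<lambda>(x, xs). x # xs) X" for X :: "('a \<times> 'a list) set"
    by (auto simp: inj_on_def)
  ultimately show ?case
    using Suc[of "\<lambda>i. A (Suc i)"]
    by (simp add: card_image card_cartesian_product prod.lessThan_Suc_shift del: prod.lessThan_Suc)
qed simp

lemma finite_lists_nth:
  assumes "\<And>i. i < n \<Longrightarrow> finite (A i)"
  shows "finite {xs. length xs = n \<and> (\<forall>i<n. xs ! i \<in> A i)}"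
proof (rule finite_subset)
  show "{xs. length xs = n \<and> (\<forall>i<n. xs ! i \<in> A i)} \<subseteq> {xs. set xs \<subseteq> (\<Union>i<n. A i) \<and> length xs = n}"
    by (fastforce simp: in_set_conv_nth)
qed (use assms in \<open>simp add: finite_lists_length_eq\<close>)

lemma full_height_walks_eq:
  assumes "m \<ge> 1"
  shows "{\<gamma>. full_height_walk m \<gamma> \<and> excess m \<gamma> = u} = strip_walks m (m - 1 + 2 * u) 0 (int m - 1)"
proof (intro set_eqI iffI)
  fix hs assume "hs \<in> {\<gamma>. full_height_walk m \<gamma> \<and> excess m \<gamma> = u}"
  then have walk: "strip_walk m hs" "hd hs = 0" "last hs = int m - 1" "excess m hs = u"
    by (auto simp: full_height_walk_def)
  define N where "N = length hs - 1"
  have "hs \<noteq> []"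
    using walk by (simp add: strip_walk_def)
  then have N: "length hs = Suc N" "hs ! 0 = 0" "hs ! N = int m - 1"
    using walk by (auto simp: N_def hd_conv_nth last_conv_nth)
  with strip_walk_displacement[OF walk(1), of N] have "m - 1 \<le> N" "even (N - (m - 1))"
    using assms by (auto simp: even_diff_nat[symmetric])
  moreover have "N - (m - 1) = 2 * u"
    using even_two_times_div_two[OF \<open>even (N - (m - 1))\<close>] walk(4)
    by (simp add: excess_def N_def)
  ultimately have "N = m - 1 + 2 * u"
    by simp
  with N walk(1) show "hs \<in> strip_walks m (m - 1 + 2 * u) 0 (int m - 1)"
    by (simp add: strip_walks_def)
next
  fix hs assume "hs \<in> strip_walks m (m - 1 + 2 * u) 0 (int m - 1)"
  then have "strip_walk m hs" "length hs = Suc (m - 1 + 2 * u)"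
    "hs ! 0 = 0" "hs ! (m - 1 + 2 * u) = int m - 1"
    by (auto simp: strip_walks_def)
  moreover from this have "hs \<noteq> []"
    by auto
  ultimately show "hs \<in> {\<gamma>. full_height_walk m \<gamma> \<and> excess m \<gamma> = u}"
    by (simp add: full_height_walk_def excess_def hd_conv_nth last_conv_nth)
qed

lemma card_full_height_walks:
  "m \<ge> 1 \<Longrightarrow> card {\<gamma>. full_height_walk m \<gamma> \<and> excess m \<gamma> = u} = Bm m u"
  by (simp add: full_height_walks_eq Bm_def walk_count_eq_card)

lemma finite_full_height_walks: "m \<ge> 1 \<Longrightarrow> finite {\<gamma>. full_height_walk m \<gamma> \<and> excess m \<gamma> = u}"
  by (simp add: full_height_walks_eq finite_strip_walks)

definition matching_walk_tuples ::
    "nat \<Rightarrow> nat list \<Rightarrow> nat \<Rightarrow> nat \<Rightarrow> (nat set set list \<times> int list list) set" where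
  "matching_walk_tuples m \<alpha> k r = {(Ms, \<gamma>s). length Ms = length \<alpha> \<and>
     (\<forall>i<length \<alpha>. path_matching (\<alpha> ! i) (Ms ! i)) \<and>
     length \<gamma>s = k \<and> (\<forall>\<gamma> \<in> set \<gamma>s. full_height_walk m \<gamma>) \<and>
     sum_list (map card Ms) + sum_list (map (excess m) \<gamma>s) = r}"

lemma matching_walk_tuples_fiber:
  assumes "(js, us) \<in> natpermute_pairs r (length \<alpha>) k"
  shows "{x \<in> matching_walk_tuples m \<alpha> k r. map card (fst x) = js \<and> map (excess m) (snd x) = us} =
    {Ms. length Ms = length \<alpha> \<and> (\<forall>i<length \<alpha>. Ms ! i \<in> path_matchings (\<alpha> ! i) (js ! i))} \<times>
    {\<gamma>s. length \<gamma>s = k \<and> (\<forall>\<nu><k. \<gamma>s ! \<nu> \<in> {\<gamma>. full_height_walk m \<gamma> \<and> excess m \<gamma> = us ! \<nu>})}"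
proof -
  have cards: "map card Ms = js \<longleftrightarrow> length Ms = length \<alpha> \<and> (\<forall>i<length \<alpha>. card (Ms ! i) = js ! i)"
    for Ms :: "nat set set list"
    using assms by (auto simp: natpermute_pairs_def list_eq_iff_nth_eq)
  have excesses: "map (excess m) \<gamma>s = us \<longleftrightarrow> length \<gamma>s = k \<and> (\<forall>\<nu><k. excess m (\<gamma>s ! \<nu>) = us ! \<nu>)"
    for \<gamma>s
    using assms by (auto simp: natpermute_pairs_def list_eq_iff_nth_eq)
  show ?thesis
    using assms
    by (auto simp: matching_walk_tuples_def natpermute_pairs_def path_matchings_def
        all_set_conv_all_nth cards excesses) (metis cards excesses)
qed

lemma card_matching_walk_tuples_fiber:
  assumes "m \<ge> 1" and "(js, us) \<in> natpermute_pairs r (length \<alpha>) k"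
  shows "card {x \<in> matching_walk_tuples m \<alpha> k r.
      map card (fst x) = js \<and> map (excess m) (snd x) = us} =
    (\<Prod>i<length \<alpha>. (\<alpha> ! i - js ! i) choose (js ! i)) * (\<Prod>\<nu><k. Bm m (us ! \<nu>))"
  unfolding matching_walk_tuples_fiber[OF assms(2)] card_cartesian_product card_lists_nth
  using assms(1) by (simp add: card_path_matchings card_full_height_walks)

lemma finite_matching_walk_tuples_fiber:
  assumes "m \<ge> 1" and "(js, us) \<in> natpermute_pairs r (length \<alpha>) k"
  shows "finite {x \<in> matching_walk_tuples m \<alpha> k r.
      map card (fst x) = js \<and> map (excess m) (snd x) = us}"
  unfolding matching_walk_tuples_fiber[OF assms(2)]
  using assms(1)
  by (intro finite_cartesian_product finite_lists_nth)
    (simp_all add: finite_path_matchings finite_full_height_walks)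

lemma finite_matching_walk_tuples:
  assumes "m \<ge> 1"
  shows "finite (matching_walk_tuples m \<alpha> k r)"
proof (rule finite_subset)
  show "matching_walk_tuples m \<alpha> k r \<subseteq> (\<Union>(js, us)\<in>natpermute_pairs r (length \<alpha>) k.
      {x \<in> matching_walk_tuples m \<alpha> k r. map card (fst x) = js \<and> map (excess m) (snd x) = us})"
    by (auto simp: matching_walk_tuples_def natpermute_pairs_def)
qed (use assms in \<open>auto intro!: finite_matching_walk_tuples_fiber simp: finite_natpermute_pairs\<close>)

lemma sum_sign_matching_walk_tuples:
  assumes "m \<ge> 1"
  shows "(\<Sum>(Ms, \<gamma>s)\<in>matching_walk_tuples m \<alpha> k r. (-1::int) ^ sum_list (map card Ms)) =
    (\<Sum>(js, us)\<in>natpermute_pairs r (length \<alpha>) k.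
       (-1) ^ sum_list js * (\<Prod>i<length \<alpha>. int ((\<alpha> ! i - js ! i) choose (js ! i)))
       * (\<Prod>\<nu><k. int (Bm m (us ! \<nu>))))"
proof -
  let ?T = "matching_walk_tuples m \<alpha> k r"
  let ?g = "\<lambda>x. (map card (fst x), map (excess m) (snd x))"
  let ?sign = "\<lambda>x. (-1::int) ^ sum_list (map card (fst x))"
  have "(\<Sum>x\<in>?T. ?sign x) = (\<Sum>y\<in>natpermute_pairs r (length \<alpha>) k. \<Sum>x\<in>{x \<in> ?T. ?g x = y}. ?sign x)"
    by (rule sum.group[symmetric, OF finite_matching_walk_tuples[OF assms] finite_natpermute_pairs])
      (auto simp: matching_walk_tuples_def natpermute_pairs_def)
  also have "\<dots> = (\<Sum>(js, us)\<in>natpermute_pairs r (length \<alpha>) k.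
      int (card {x \<in> ?T. map card (fst x) = js \<and> map (excess m) (snd x) = us}) *
      (-1) ^ sum_list js)"
  proof (intro sum.cong refl)
    fix y assume "y \<in> natpermute_pairs r (length \<alpha>) k"
    obtain js us where y: "y = (js, us)"
      by fastforce
    have "(\<Sum>x\<in>{x \<in> ?T. ?g x = y}. ?sign x) = (\<Sum>x\<in>{x \<in> ?T. ?g x = y}. (-1) ^ sum_list js)"
      by (rule sum.cong) (auto simp: y)
    then show "(\<Sum>x\<in>{x \<in> ?T. ?g x = y}. ?sign x) = (case y of (js, us) \<Rightarrow>
        int (card {x \<in> ?T. map card (fst x) = js \<and> map (excess m) (snd x) = us}) *
        (-1) ^ sum_list js)"
      by (simp add: y)
  qed
  finally show ?thesis
    using assms by (simp add: card_matching_walk_tuples_fiber case_prod_unfold mult_ac)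
qed

lemma prod_list_map_split_max:
  fixes f :: "nat \<Rightarrow> 'a::comm_monoid_mult"
  assumes "\<forall>x\<in>set xs. x \<le> (m::nat)"
  shows "prod_list (map f xs) = f m ^ count_list xs m * prod_list (map f (filter (\<lambda>x. x < m) xs))"
  using assms by (induction xs) (auto simp: mult_ac)

lemma fps_pp_quotient_cancel:
  assumes "\<forall>x\<in>set \<xi>. x \<le> m" and "count_list \<xi> m \<le> e"
  shows "fps_of_poly (pp a * prod_list (map pp \<xi>)) * inverse (fps_of_poly (pp m)) ^ e =
    prod_list (map (\<lambda>b. fps_of_poly (pp b)) (a # filter (\<lambda>x. x < m) \<xi>)) *
    (inverse (fps_of_poly (pp m)) ^ (e - count_list \<xi> m) :: 'a::field fps)"
proof -
  let ?P = "\<lambda>b. fps_of_poly (pp b) :: 'a fps"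
  let ?I = "inverse (?P m)"
  let ?R = "prod_list (map ?P (filter (\<lambda>x. x < m) \<xi>))"
  let ?t = "count_list \<xi> m"
  have "fps_of_poly (prod_list (map pp \<xi>)) = ?P m ^ ?t * ?R"
    using prod_list_map_split_max[OF assms(1)] by (simp add: fps_of_poly_prod_list o_def)
  moreover have "?I ^ e = ?I ^ ?t * ?I ^ (e - ?t)"
    using assms(2) by (simp flip: power_add)
  ultimately have "fps_of_poly (pp a * prod_list (map pp \<xi>)) * ?I ^ e =
      ?P a * ?R * (?P m * ?I) ^ ?t * ?I ^ (e - ?t)"
    by (simp add: fps_of_poly_mult power_mult_distrib mult_ac)
  then show ?thesis
    by (simp add: fps_of_poly_pp_times_inverse)
qed

lemma fps_nth_pp_prod_inverse_power:
  assumes "m \<ge> 1"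
  shows "(prod_list (map (\<lambda>a. fps_of_poly (pp a)) \<alpha>) * inverse (fps_of_poly (pp m)) ^ k) $ r =
    (of_int (\<Sum>(js, us)\<in>natpermute_pairs r (length \<alpha>) k.
       (-1) ^ sum_list js * (\<Prod>i<length \<alpha>. int ((\<alpha> ! i - js ! i) choose (js ! i)))
       * (\<Prod>\<nu><k. int (Bm m (us ! \<nu>)))) :: 'a::field)"
proof -
  have sign: "(\<Prod>i<length js. (-1 :: 'a) ^ (js ! i)) = (-1) ^ sum_list js" for js
    by (simp add: power_sum sum_list_sum_nth atLeast0LessThan)
  have "(prod_list (map (\<lambda>a. fps_of_poly (pp a)) \<alpha>) * inverse (fps_of_poly (pp m)) ^ k) $ r =
      (\<Sum>(js, us)\<in>natpermute_pairs r (length \<alpha>) k.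
        (\<Prod>i<length \<alpha>. (-1) ^ (js ! i) * of_nat ((\<alpha> ! i - js ! i) choose (js ! i))) *
        (\<Prod>\<nu><k. of_nat (Bm m (us ! \<nu>)) :: 'a))"
    using fps_nth_prod_list_mult[of "map (\<lambda>a. fps_of_poly (pp a) :: 'a fps) \<alpha>"
        "replicate k (inverse (fps_of_poly (pp m)))" r]
    by (simp add: coeff_pp inverse_pp_nth[OF assms])
  also have "\<dots> = (\<Sum>(js, us)\<in>natpermute_pairs r (length \<alpha>) k.
        (-1) ^ sum_list js * (\<Prod>i<length \<alpha>. of_nat ((\<alpha> ! i - js ! i) choose (js ! i))) *
        (\<Prod>\<nu><k. of_nat (Bm m (us ! \<nu>))))"
    by (intro sum.cong refl) (auto simp: natpermute_pairs_def prod.distrib simp flip: sign)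
  finally show ?thesis
    by (simp add: case_prod_unfold)
qed

theorem theorem1p2:
  fixes m \<mu> r :: nat and \<xi> :: "nat list"
  assumes "m \<ge> 1"
    and "sorted_wrt (\<ge>) \<xi>"
    and "\<forall>x \<in> set \<xi>. 0 < x \<and> x \<le> m"
    and "int (\<mu> div m) + 1 - int (count_list \<xi> m) \<ge> 0"
  shows
   "let \<mu>1 = \<mu> div m; \<mu>0 = \<mu> mod m; t = count_list \<xi> m;
        k = \<mu>1 + 1 - t;
        \<alpha> = (m - \<mu>0 - 1) # filter (\<lambda>x. x < m) \<xi>;
        L = length \<alpha> - 1;
        F = fps_of_poly (pp (m - \<mu>0 - 1) * prod_list (map pp \<xi>))
              * inverse (fps_of_poly (pp m)) ^ (\<mu>1 + 1) :: rat fps;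
        a = fps_nth F r
    in a = of_int (\<Sum>(js, us) \<in> {(js, us). length js = L + 1 \<and> length us = k \<and>
                                        sum_list js + sum_list us = r}.
                 (-1) ^ sum_list js
                 * (\<Prod>i<L + 1. int ((\<alpha> ! i - js ! i) choose (js ! i)))
                 * (\<Prod>\<nu><k. int (Bm m (us ! \<nu>))))
     \<and> a = of_int (\<Sum>(Ms, \<gamma>s) \<in> {(Ms, \<gamma>s). length Ms = L + 1 \<and>
                                        (\<forall>i<L + 1. path_matching (\<alpha> ! i) (Ms ! i)) \<and>
                                        length \<gamma>s = k \<and>
                                        (\<forall>\<gamma> \<in> set \<gamma>s. full_height_walk m \<gamma>) \<and>
                                        sum_list (map card Ms) + sum_list (map (excess m) \<gamma>s) = r}.
                 (-1) ^ sum_list (map card Ms))"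
proof -
  define \<mu>1 where "\<mu>1 = \<mu> div m"
  define \<mu>0 where "\<mu>0 = \<mu> mod m"
  define t where "t = count_list \<xi> m"
  define k where "k = \<mu>1 + 1 - t"
  define \<alpha> where "\<alpha> = (m - \<mu>0 - 1) # filter (\<lambda>x. x < m) \<xi>"
  define L where "L = length \<alpha> - 1"
  define F :: "rat fps" where "F = fps_of_poly (pp (m - \<mu>0 - 1) * prod_list (map pp \<xi>))
    * inverse (fps_of_poly (pp m)) ^ (\<mu>1 + 1)"
  have length_\<alpha>: "length \<alpha> = L + 1"
    by (simp add: L_def \<alpha>_def)
  have "prod_list (map (\<lambda>a. fps_of_poly (pp a)) \<alpha>) * inverse (fps_of_poly (pp m)) ^ k = F"
    using assms(3,4) unfolding F_def \<alpha>_def k_def t_def \<mu>1_def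
    by (intro fps_pp_quotient_cancel[symmetric]) auto
  note coefficient = fps_nth_pp_prod_inverse_power[where 'a = rat, OF assms(1), of \<alpha> k r,
      unfolded this natpermute_pairs_def length_\<alpha>]
  note count = sum_sign_matching_walk_tuples[OF assms(1), of \<alpha> k r, symmetric,
      unfolded matching_walk_tuples_def natpermute_pairs_def length_\<alpha>]
  show ?thesis
    unfolding Let_def
    using coefficient coefficient[unfolded count]
    unfolding F_def \<mu>1_def \<mu>0_def t_def k_def \<alpha>_def L_def
    by (intro conjI)
qed

end
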